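(* Let $\mathcal{X}$ be a finite-dimensional real Hilbert space with norm $\|\cdot\|$. Let $\mathbb{P}_{\mathrm{true}}$ be a probability distribution on $\mathcal{X}$ whose support $\mathcal{M}=\mathrm{supp}(\mathbb{P}_{\mathrm{true}})$ is a convex, compact set. Let $\{\mathbb{P}^k\}_{k\in\mathbb{N}}$ be probability distributions on $\mathcal{X}$ such that, for all $k\in\mathbb{N}$, $(P_{\mathcal{M}})_\#\mathbb{P}^k=\mathbb{P}_{\mathrm{true}}$ (up to a set of measure zero). Let $\Gamma$ be the set of nonnegative $1$-Lipschitz functions $f:\mathcal{X}\to\mathbb{R}$. Then for all $k\in\mathbb{N}$, $\tau\in[0,\infty)$ and $p\in[1,\infty)$, the distance function $d_{\mathcal{M}}$ is a solution to $$\min_{f\in\Gamma}\; \mathbb{E}_{u\sim\mathbb{P}_{\mathrm{true}}}\big[f(u)+\tau f(u)^p\big]-\mathbb{E}_{u^k\sim\mathbb{P}^k}\big[f(u^k)\big].$$ Moreover, when $\tau>0$, the restriction of each minimizer $f^\star$ of this problem to the support of $\mathbb{P}^k$ is unique, i.e. $f^\star(u^k)=d_{\mathcal{M}}(u^k)$ for all $u^k\in\mathrm{supp}(\mathbb{P}^k)$.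
   Context: For a convex compact set $\mathcal{M}\subset\mathcal{X}$, $P_{\mathcal{M}}(u)=\arg\min_{v\in\mathcal{M}}\|v-u\|$ is the metric projection and $d_{\mathcal{M}}(u)=\inf_{v\in\mathcal{M}}\|v-u\|=\|P_{\mathcal{M}}(u)-u\|$ is the pointwise distance function. For a map $T$ and a probability measure $\mathbb{Q}$, $T_\#\mathbb{Q}$ denotes the push-forward measure, $T_\#\mathbb{Q}[U]=\mathbb{Q}[T^{-1}(U)]$.
   Formalization: For $\tau>0$, uniqueness of minimizers on the support of $\mathbb{P}^k$ is claimed only when $\mathbb{P}^k$ has finite first moment, that is, $\mathbb{E}_{u^k\sim\mathbb{P}^k}[\|u^k\|] < \infty$. The statement above fails without it. *)

theory Defs
  imports "HOL-Analysis.Analysis" "HOL-Probability.Probability"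
begin

text \<open>Support of a Borel measure: the set of points all of whose open
  neighbourhoods have positive measure (the smallest closed set of full measure
  in a second countable space).\<close>
definition support :: "'a::topological_space measure \<Rightarrow> 'a set" where
  "support \<mu> = {x. \<forall>U. open U \<and> x \<in> U \<longrightarrow> emeasure \<mu> U > 0}"

definition Gamma :: "('a::metric_space \<Rightarrow> real) set" where
  "Gamma = {f. (\<forall>x. 0 \<le> f x) \<and> 1-lipschitz_on UNIV f}"

text \<open>Both expectations are of nonnegative functions, hence always well defined in
  [0,\<infinity>]; the difference is taken in the extended reals.\<close>
definition objective ::
  "'a measure \<Rightarrow> 'a measure \<Rightarrow> real \<Rightarrow> real \<Rightarrow> ('a \<Rightarrow> real) \<Rightarrow> ereal" where
  "objective Ptrue Pk \<tau> p f =
     enn2ereal (\<integral>\<^sup>+ u. ennreal (f u + \<tau> * f u powr p) \<partial>Ptrue)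
     - enn2ereal (\<integral>\<^sup>+ u. ennreal (f u) \<partial>Pk)"

end

theory Submission
  imports Defs
begin

text \<open>Every \<open>f \<in> Gamma\<close> is 1-Lipschitz, so with \<open>\<pi> = closest_point M\<close> we have
  \<open>f u \<le> f (\<pi> u) + \<tau> f (\<pi> u)^p + d\<^sub>M u\<close>. Integrating against \<open>P\<^sup>k\<close> and using
  \<open>\<pi>\<^sub>#P\<^sup>k = P\<^sub>t\<^sub>r\<^sub>u\<^sub>e\<close> turns this into \<open>objective f \<ge> -\<integral> d\<^sub>M dP\<^sup>k = objective d\<^sub>M\<close>.
  For a minimizer with \<open>\<tau> > 0\<close> (and finite first moment, so that no \<open>\<infinity> - \<infinity>\<close> occurs) the
  integrated inequality is an equality, hence the pointwise one holds \<open>P\<^sup>k\<close>-a.e.; this forces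
  \<open>f (\<pi> u) = 0\<close> and then \<open>f u = d\<^sub>M u\<close> a.e. Both sides are continuous, so the open set where
  they differ is null and misses the support.\<close>

lemma enn2ereal_diff_ge_neg:
  fixes x y z :: ennreal
  assumes "x \<le> y + z"
  shows "- enn2ereal z \<le> enn2ereal y - enn2ereal x"
  by (metis assms enn2ereal_nonneg ereal_diff_add_assoc2 ereal_diff_positive
    ereal_minus(8) ereal_minus_le_iff less_eq_ennreal.rep_eq
    not_MInfty_nonneg plus_ennreal.rep_eq)

lemma enn2ereal_diff_le_neg_imp_add_le:
  fixes x y z :: ennreal
  assumes "x < \<infinity>" "z < \<infinity>" and "enn2ereal y - enn2ereal x \<le> - enn2ereal z"
  shows "y + z \<le> x"
proof -
  obtain a where a: "x = ennreal a" "a \<ge> 0" using assms(1) by (cases x rule: ennreal_cases) auto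
  obtain c where c: "z = ennreal c" "c \<ge> 0" using assms(2) by (cases z rule: ennreal_cases) auto
  show ?thesis
  proof (cases y rule: ennreal_cases)
    case (real b)
    then show ?thesis using assms(3) a c
      by (smt (verit) enn2ereal_ennreal ennreal_le_iff ennreal_plus
        ereal_less_eq(3) ereal_minus(1,8) zero_ereal_def)
  qed (use assms(3) a c in simp)
qed

lemma nn_integral_lipschitz_finite:
  fixes f :: "'a::real_normed_vector \<Rightarrow> real"
  assumes "finite_measure Q" "sets Q = sets borel"
    and moment: "(\<integral>\<^sup>+ u. ennreal (norm u) \<partial>Q) < \<infinity>"
    and f: "L-lipschitz_on UNIV f"
  shows "(\<integral>\<^sup>+ u. ennreal (f u) \<partial>Q) < \<infinity>"
proof -
  have [measurable_cong]: "sets Q = sets borel" by fact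
  have L: "0 \<le> L" using f by (rule lipschitz_on_nonneg)
  have "f u \<le> \<bar>f 0\<bar> + L * norm u" for u
    using lipschitz_onD[OF f, of u 0] by (simp add: dist_real_def dist_norm)
  then have "(\<integral>\<^sup>+ u. ennreal (f u) \<partial>Q) \<le> (\<integral>\<^sup>+ u. ennreal \<bar>f 0\<bar> + ennreal L * ennreal (norm u) \<partial>Q)"
    using L by (intro nn_integral_mono) (simp add: ennreal_plus[symmetric] ennreal_mult[symmetric] ennreal_leI del: ennreal_plus)
  also have "\<dots> = ennreal \<bar>f 0\<bar> * emeasure Q (space Q) + ennreal L * (\<integral>\<^sup>+ u. ennreal (norm u) \<partial>Q)"
    by (simp add: nn_integral_add nn_integral_cmult)
  also have "\<dots> < \<infinity>"
    using moment finite_measure.emeasure_finite[OF assms(1)]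
    by (simp add: ennreal_mult_less_top ennreal_mult_eq_top_iff top.not_eq_extremum)
  finally show ?thesis .
qed

lemma AE_eq_imp_eq_on_support:
  fixes f g :: "'a::topological_space \<Rightarrow> 'b::t2_space"
  assumes "sets Q = sets borel" "continuous_on UNIV f" "continuous_on UNIV g"
    and "AE u in Q. f u = g u" and "u \<in> support Q"
  shows "f u = g u"
proof (rule ccontr)
  define U where "U = {v. f v \<noteq> g v}"
  have "open U" unfolding U_def using assms(2,3) by (intro open_Collect_neq) auto
  then have "U \<in> sets Q" using assms(1) by simp
  then have "emeasure Q U = 0"
    using assms(4) sets_eq_imp_space_eq[OF assms(1)] by (simp add: AE_iff_measurable U_def)
  moreover assume "f u \<noteq> g u"
  then have "emeasure Q U > 0"
    using assms(5) \<open>open U\<close> unfolding support_def U_def by auto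
  ultimately show False by simp
qed

lemma Gamma_nonneg: "f \<in> Gamma \<Longrightarrow> 0 \<le> f u"
  unfolding Gamma_def by auto

lemma Gamma_lipschitz: "f \<in> Gamma \<Longrightarrow> 1-lipschitz_on UNIV f"
  unfolding Gamma_def by auto

lemma Gamma_le_add_dist: "f \<in> Gamma \<Longrightarrow> f u \<le> f v + dist u v"
  using lipschitz_onD[OF Gamma_lipschitz, of f u v] by (simp add: dist_real_def)

lemma Gamma_continuous_on: "f \<in> Gamma \<Longrightarrow> continuous_on UNIV f"
  by (rule lipschitz_on_continuous_on[OF Gamma_lipschitz])

lemma Gamma_borel_measurable: "f \<in> Gamma \<Longrightarrow> f \<in> borel_measurable borel"
  by (rule borel_measurable_continuous_onI[OF Gamma_continuous_on])

lemma infdist_in_Gamma: "(\<lambda>u. infdist u M) \<in> Gamma"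
  unfolding Gamma_def
  by (auto simp: infdist_nonneg lipschitz_on_def dist_real_def infdist_triangle_abs)

lemma infdist_eq_dist_closest_point:
  assumes "closed M" "M \<noteq> {}"
  shows "infdist u M = dist u (closest_point M u)"
proof (rule antisym)
  show "infdist u M \<le> dist u (closest_point M u)"
    by (rule infdist_le[OF closest_point_in_set[OF assms]])
  obtain y where "y \<in> M" "infdist u M = dist u y"
    using infdist_attains_inf[OF assms] by blast
  then show "dist u (closest_point M u) \<le> infdist u M"
    using closest_point_le[OF assms(1)] by simp
qed

lemma Gamma_le_closest_point_add_infdist:
  assumes "f \<in> Gamma" "closed M" "M \<noteq> {}"
  shows "f u \<le> f (closest_point M u) + infdist u M"
  using Gamma_le_add_dist[OF assms(1)] infdist_eq_dist_closest_point[OF assms(2,3)] by simp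

lemma Gamma_le_penalty_add_infdist:
  assumes "f \<in> Gamma" "closed M" "M \<noteq> {}" "0 \<le> \<tau>"
  shows "f u \<le> f (closest_point M u) + \<tau> * f (closest_point M u) powr p + infdist u M"
proof -
  have "0 \<le> \<tau> * f (closest_point M u) powr p"
    using assms(4) by simp
  then show ?thesis
    using Gamma_le_closest_point_add_infdist[OF assms(1-3), of u] by linarith
qed

lemma closest_point_measurable:
  assumes "sets Q = sets borel" "convex M" "closed M" "M \<noteq> {}"
  shows "closest_point M \<in> measurable Q borel"
  unfolding measurable_cong_sets[OF assms(1) refl]
  by (rule borel_measurable_continuous_onI[OF continuous_on_closest_point[OF assms(2-4)]])

lemma in_support_distr_const:
  assumes "prob_space Q"
  shows "c \<in> support (distr Q borel (\<lambda>_. c))"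
  unfolding support_def
  using prob_space.emeasure_space_1[OF assms] by (auto simp: emeasure_distr)

text \<open>\<open>closest_point {}\<close> is the junk constant \<open>SOME x. False\<close>, whose push-forward is a
  point mass.\<close>
lemma support_distr_closest_point_nonempty:
  assumes "prob_space Q" "M = support (distr Q borel (closest_point M))"
  shows "M \<noteq> {}"
proof
  assume "M = {}"
  then have "closest_point M = (\<lambda>_. SOME x. False)"
    by (auto simp: closest_point_def)
  then have "(SOME x. False) \<in> M"
    using in_support_distr_const[OF assms(1)] assms(2) by simp
  with \<open>M = {}\<close> show False by simp
qed

lemma objective_distr:
  assumes "\<pi> \<in> measurable Q borel" "f \<in> borel_measurable borel"
  shows "objective (distr Q borel \<pi>) Q \<tau> p f =
    enn2ereal (\<integral>\<^sup>+ u. ennreal (f (\<pi> u) + \<tau> * f (\<pi> u) powr p) \<partial>Q)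
    - enn2ereal (\<integral>\<^sup>+ u. ennreal (f u) \<partial>Q)"
  using assms by (simp add: objective_def nn_integral_distr)

lemma nn_integral_penalty_add_infdist:
  fixes M :: "'a::{real_inner,heine_borel} set"
  assumes Q: "sets Q = sets borel" and M: "convex M" "closed M" "M \<noteq> {}"
    and f: "f \<in> Gamma" and \<tau>: "0 \<le> \<tau>"
  shows "(\<integral>\<^sup>+ u. ennreal (f (closest_point M u) + \<tau> * f (closest_point M u) powr p
            + infdist u M) \<partial>Q)
       = (\<integral>\<^sup>+ u. ennreal (f (closest_point M u) + \<tau> * f (closest_point M u) powr p) \<partial>Q)
         + (\<integral>\<^sup>+ u. ennreal (infdist u M) \<partial>Q)"
proof -
  note \<pi> = closest_point_measurable[OF Q M]
  have d: "(\<lambda>u. infdist u M) \<in> borel_measurable Q"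
    using Gamma_borel_measurable[OF infdist_in_Gamma] by (simp add: measurable_cong_sets[OF Q refl])
  have fp: "(\<lambda>u. f (closest_point M u)) \<in> borel_measurable Q"
    using measurable_compose[OF \<pi> Gamma_borel_measurable[OF f]] .
  have "ennreal (f (closest_point M u) + \<tau> * f (closest_point M u) powr p + infdist u M)
      = ennreal (f (closest_point M u) + \<tau> * f (closest_point M u) powr p) + ennreal (infdist u M)"
    for u using Gamma_nonneg[OF f] \<tau> infdist_nonneg by (intro ennreal_plus) auto
  then show ?thesis
    using fp d by (simp only:) (rule nn_integral_add; simp)
qed

lemma objective_infdist_distr_closest_point:
  fixes M :: "'a::{real_inner,heine_borel} set"
  assumes Q: "sets Q = sets borel" and M: "convex M" "closed M" "M \<noteq> {}"
  shows "objective (distr Q borel (closest_point M)) Q \<tau> p (\<lambda>u. infdist u M)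
    = - enn2ereal (\<integral>\<^sup>+ u. ennreal (infdist u M) \<partial>Q)"
proof -
  note \<pi> = closest_point_measurable[OF Q M]
  have "infdist (closest_point M u) M = 0" for u
    by (rule infdist_zero[OF closest_point_in_set[OF M(2,3)]])
  then show ?thesis
    by (simp add: objective_distr[OF \<pi> Gamma_borel_measurable[OF infdist_in_Gamma]]
      zero_ennreal.rep_eq)
qed

lemma infdist_minimizes_objective:
  fixes M :: "'a::{real_inner,heine_borel} set"
  assumes Q: "sets Q = sets borel" and M: "convex M" "closed M" "M \<noteq> {}"
    and f: "f \<in> Gamma" and \<tau>: "0 \<le> \<tau>"
  shows "objective (distr Q borel (closest_point M)) Q \<tau> p (\<lambda>u. infdist u M)
    \<le> objective (distr Q borel (closest_point M)) Q \<tau> p f"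
proof -
  note \<pi> = closest_point_measurable[OF Q M]
  have "(\<integral>\<^sup>+ u. ennreal (f u) \<partial>Q) \<le> (\<integral>\<^sup>+ u. ennreal (f (closest_point M u)
      + \<tau> * f (closest_point M u) powr p + infdist u M) \<partial>Q)"
    using Gamma_le_penalty_add_infdist[OF f M(2,3) \<tau>] by (intro nn_integral_mono ennreal_leI)
  then show ?thesis
    unfolding objective_infdist_distr_closest_point[OF Q M]
      objective_distr[OF \<pi> Gamma_borel_measurable[OF f]]
      nn_integral_penalty_add_infdist[OF Q M f \<tau>]
    by (rule enn2ereal_diff_ge_neg)
qed

lemma Gamma_eq_infdist_if_gap_nonpos:
  assumes f: "f \<in> Gamma" and M: "closed M" "M \<noteq> {}" and \<tau>: "0 < \<tau>"
    and gap: "f (closest_point M u) + \<tau> * f (closest_point M u) powr p + infdist u M \<le> f u"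
  shows "f u = infdist u M"
proof -
  have "\<tau> * f (closest_point M u) powr p \<le> 0"
    using gap Gamma_le_closest_point_add_infdist[OF f M, of u] by linarith
  then have "f (closest_point M u) powr p \<le> 0"
    using \<tau> by (simp add: mult_le_0_iff)
  then have "f (closest_point M u) = 0"
    by (metis powr_ge_zero order.antisym powr_eq_0_iff)
  then show ?thesis
    using gap Gamma_le_closest_point_add_infdist[OF f M, of u] by simp
qed

lemma minimizer_AE_eq_infdist:
  fixes M :: "'a::{real_inner,heine_borel} set"
  assumes Q: "sets Q = sets borel" and M: "convex M" "closed M" "M \<noteq> {}"
    and f: "f \<in> Gamma" and \<tau>: "0 < \<tau>"
    and f_finite: "(\<integral>\<^sup>+ u. ennreal (f u) \<partial>Q) < \<infinity>"
    and infdist_finite: "(\<integral>\<^sup>+ u. ennreal (infdist u M) \<partial>Q) < \<infinity>"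
    and opt: "objective (distr Q borel (closest_point M)) Q \<tau> p f
      \<le> objective (distr Q borel (closest_point M)) Q \<tau> p (\<lambda>u. infdist u M)"
  shows "AE u in Q. f u = infdist u M"
proof -
  define G where "G u = f (closest_point M u) + \<tau> * f (closest_point M u) powr p + infdist u M"
    for u
  note \<pi> = closest_point_measurable[OF Q M]
  have fm: "f \<in> borel_measurable Q"
    using Gamma_borel_measurable[OF f] by (simp add: measurable_cong_sets[OF Q refl])
  have [measurable_cong]: "sets Q = sets borel" by (rule Q)
  note [measurable] = closest_point_measurable[OF refl M] Gamma_borel_measurable[OF f]
    Gamma_borel_measurable[OF infdist_in_Gamma, of M]
  have Gm: "G \<in> borel_measurable Q"
    unfolding G_def by measurable
  have G_le_f: "(\<integral>\<^sup>+ u. ennreal (G u) \<partial>Q) \<le> (\<integral>\<^sup>+ u. ennreal (f u) \<partial>Q)"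
    using opt unfolding G_def nn_integral_penalty_add_infdist[OF Q M f less_imp_le[OF \<tau>]]
      objective_infdist_distr_closest_point[OF Q M] objective_distr[OF \<pi> Gamma_borel_measurable[OF f]]
    by (rule enn2ereal_diff_le_neg_imp_add_le[OF f_finite infdist_finite])
  have f_le_G: "ennreal (f u) \<le> ennreal (G u)" for u
    unfolding G_def using Gamma_le_penalty_add_infdist[OF f M(2,3) less_imp_le[OF \<tau>]]
    by (intro ennreal_leI)
  have "AE u in Q. ennreal (G u) \<le> ennreal (f u)"
  proof (rule ccontr)
    assume "\<not> (AE u in Q. ennreal (G u) \<le> ennreal (f u))"
    then have "(\<integral>\<^sup>+ u. ennreal (f u) \<partial>Q) < (\<integral>\<^sup>+ u. ennreal (G u) \<partial>Q)"
      using fm Gm f_finite f_le_G by (intro nn_integral_less) auto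
    with G_le_f show False by simp
  qed
  then show ?thesis
    by eventually_elim
      (use Gamma_eq_infdist_if_gap_nonpos[OF f M(2,3) \<tau>] Gamma_nonneg[OF f] in \<open>simp add: G_def\<close>)
qed

lemma minimizer_eq_infdist_on_support:
  fixes M :: "'a::{real_inner,heine_borel} set"
  assumes "finite_measure Q" and Q: "sets Q = sets borel"
    and M: "convex M" "closed M" "M \<noteq> {}"
    and f: "f \<in> Gamma" and \<tau>: "0 < \<tau>"
    and moment: "(\<integral>\<^sup>+ u. ennreal (norm u) \<partial>Q) < \<infinity>"
    and opt: "objective (distr Q borel (closest_point M)) Q \<tau> p f
      \<le> objective (distr Q borel (closest_point M)) Q \<tau> p (\<lambda>u. infdist u M)"
    and u: "u \<in> support Q"
  shows "f u = infdist u M"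
proof -
  note finite = nn_integral_lipschitz_finite[OF assms(1) Q moment Gamma_lipschitz]
  have "AE u in Q. f u = infdist u M"
    using minimizer_AE_eq_infdist[OF Q M f \<tau> finite[OF f] finite[OF infdist_in_Gamma] opt] .
  then show ?thesis
    using AE_eq_imp_eq_on_support[OF Q Gamma_continuous_on[OF f]
      Gamma_continuous_on[OF infdist_in_Gamma] _ u] by blast
qed

theorem theorem3p1:
  fixes Ptrue :: "'a::euclidean_space measure"
    and P :: "nat \<Rightarrow> 'a measure"
    and M :: "'a set"
  assumes "prob_space Ptrue" and "sets Ptrue = sets borel"
    and "\<And>k. prob_space (P k)" and "\<And>k. sets (P k) = sets borel"
    and "M = support Ptrue" and "convex M" and "compact M"
    and "\<And>k. distr (P k) borel (closest_point M) = Ptrue"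
  shows "(\<forall>k. \<forall>\<tau>\<ge>0. \<forall>p\<ge>1.
           (\<lambda>u. infdist u M) \<in> Gamma \<and>
           (\<forall>f\<in>Gamma. objective Ptrue (P k) \<tau> p (\<lambda>u. infdist u M)
                         \<le> objective Ptrue (P k) \<tau> p f)) \<and>
         (\<forall>k. \<forall>\<tau>>0. \<forall>p\<ge>1. \<forall>f.
           (\<integral>\<^sup>+ u. ennreal (norm u) \<partial>P k) < \<infinity> \<and>
           f \<in> Gamma \<and> (\<forall>g\<in>Gamma. objective Ptrue (P k) \<tau> p f \<le> objective Ptrue (P k) \<tau> p g)
           \<longrightarrow> (\<forall>u\<in>support (P k). f u = infdist u M))"
proof -
  have "M \<noteq> {}"
    using support_distr_closest_point_nonempty[OF assms(3)] assms(5,8) by metis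
  then have M: "convex M" "closed M" "M \<noteq> {}"
    using assms(6) compact_imp_closed[OF assms(7)] by auto
  have Ptrue: "Ptrue = distr (P k) borel (closest_point M)" for k
    using assms(8) by simp
  show ?thesis
  proof (intro conjI allI impI ballI)
    fix k :: nat and \<tau> p :: real and f :: "'a \<Rightarrow> real"
    assume "0 \<le> \<tau>" "f \<in> Gamma"
    then show "objective Ptrue (P k) \<tau> p (\<lambda>u. infdist u M) \<le> objective Ptrue (P k) \<tau> p f"
      unfolding Ptrue[of k] by (intro infdist_minimizes_objective assms(4) M)
  next
    fix k :: nat and \<tau> p :: real and f :: "'a \<Rightarrow> real" and u
    assume "0 < \<tau>" and "u \<in> support (P k)"
      and "(\<integral>\<^sup>+ u. ennreal (norm u) \<partial>P k) < \<infinity> \<and> f \<in> Gamma \<and>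
        (\<forall>g\<in>Gamma. objective Ptrue (P k) \<tau> p f \<le> objective Ptrue (P k) \<tau> p g)"
    then show "f u = infdist u M"
      unfolding Ptrue[of k]
      by (intro minimizer_eq_infdist_on_support[OF prob_space.axioms(1)[OF assms(3)] assms(4) M])
        (auto intro: infdist_in_Gamma)
  qed (rule infdist_in_Gamma)
qed

end
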